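(* Let $p$ be an odd prime, $K$ a field of characteristic $p$, $s\geq1$ an integer, and $n=1+p^s$. Let $X$ be the $n\times n$ matrix with entries $1$ in positions $(i,i+1)$, $1\leq i\leq n-1$, and $0$ elsewhere, and let $B=1+X$. Let $k$ be an integer with $1\leq k\leq s$, and let $A$ be the unique matrix in $\mathrm{U}_n(K)$ whose last column is zero except for the entry $1$ in position $(n,n)$ and which satisfies $ABA^{-1}=B^{1+p^k}$. Then the order of $A$ is $p^{s+1-k}$.
   Context: $\mathrm{U}_n(K)$ is the group of upper-triangular unipotent $n\times n$ matrices over $K$. (The existence and uniqueness of such $A$ is part of the setup.) *)

theory Defs
  imports "Jordan_Normal_Form.Matrix"
begin

(* Matrices are 0-indexed: entry (i,j) of the paper is A $$ (i-1, j-1). *)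

definition unitriangular_mat :: "nat \<Rightarrow> 'a :: field mat set" where
  "unitriangular_mat n = {A. A \<in> carrier_mat n n \<and>
      (\<forall>i<n. A $$ (i,i) = 1) \<and> (\<forall>i<n. \<forall>j<n. j < i \<longrightarrow> A $$ (i,j) = 0)}"

definition shift_mat :: "nat \<Rightarrow> 'a :: field mat" where
  "shift_mat n = mat n n (\<lambda>(i,j). if j = i + 1 then 1 else 0)"

definition mat_order :: "nat \<Rightarrow> 'a :: field mat \<Rightarrow> nat" where
  "mat_order n A = (LEAST m. 0 < m \<and> A ^\<^sub>m m = 1\<^sub>m n)"

end

theory Submission
  imports Defs "Jordan_Normal_Form.Jordan_Normal_Form" "HOL-Number_Theory.Cong"
begin

text \<open>
  Write B = 1 + X for the unipotent Jordan block and r = 1 + p^k. From A B A^-1 = B^r one gets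
  A^m B = B^(r^m) A^m. A matrix that commutes with B and has last column e_n is the identity,
  so A^m = 1 iff B^(r^m) = B. In characteristic p the freshman's dream gives B^(p^s) = 1 + E_1n,
  hence B^(1 + p^s N) = B iff p divides N. Finally, as p is odd, lifting the exponent gives
  r^(p^j) = 1 + p^(k+j) u with u prime to p, so A^(p^(s-k)) is not 1 but A^(p^(s+1-k)) is.
\<close>

section \<open>Lifting the exponent\<close>

lemma pow_cong_one_add_mult:
  fixes x :: int
  shows "[x ^ i = 1 + int i * (x - 1)] (mod (x - 1)^2)"
proof (induction i)
  case 0
  then show ?case by simp
next
  case (Suc i)
  have "[x ^ Suc i = x * (1 + int i * (x - 1))] (mod (x - 1)^2)"
    using cong_mult[OF cong_refl Suc.IH] by simp
  also have "x * (1 + int i * (x - 1)) = 1 + int (Suc i) * (x - 1) + (x - 1)^2 * int i"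
    by (simp add: algebra_simps power2_eq_square)
  also have "[\<dots> = 1 + int (Suc i) * (x - 1)] (mod (x - 1)^2)"
    by (simp add: cong_iff_dvd_diff)
  finally show ?case .
qed

lemma geometric_sum_odd_cong:
  fixes x :: int
  assumes "n = Suc (2 * r)"
  shows "[(\<Sum>i<n. x ^ i) = int n * (1 + int r * (x - 1))] (mod (x - 1)^2)"
proof -
  have "[(\<Sum>i<n. x ^ i) = (\<Sum>i<n. 1 + int i * (x - 1))] (mod (x - 1)^2)"
    by (intro cong_sum pow_cong_one_add_mult)
  also have "(\<Sum>i<n. 1 + int i * (x - 1)) = int n * (1 + int r * (x - 1))"
    using double_arith_series[of 1 "x - 1" "2 * r"] assms
    by (simp add: lessThan_Suc_atMost atLeast0AtMost algebra_simps)
  finally show ?thesis .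
qed

lemma prime_power_lifting_step:
  fixes p :: nat and x y :: int
  assumes p: "prime p" "odd p" and e: "1 \<le> e"
    and x: "x = 1 + int p ^ e * y" and y: "\<not> int p dvd y"
  shows "\<exists>z. x ^ p = 1 + int p ^ (e + 1) * z \<and> \<not> int p dvd z"
proof -
  define d where "d = int p ^ (e - 1) * y"
  have x_d: "x - 1 = int p * d"
    using x e by (simp add: d_def power_eq_if)
  obtain r where r: "p = Suc (2 * r)"
    using \<open>odd p\<close> by (auto elim: oddE)
  obtain t
    where geometric_sum: "(\<Sum>i<p. x ^ i) = int p * (1 + int r * (x - 1)) + (x - 1)^2 * t"
    using geometric_sum_odd_cong[OF r, of x] by (metis cong_iff_lin cong_sym)
  define u where "u = int r * d + d^2 * t"
  have sum: "(\<Sum>i<p. x ^ i) = int p * (1 + int p * u)"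
    using geometric_sum by (simp add: u_def x_d algebra_simps power2_eq_square)
  define z where "z = y * (1 + int p * u)"
  have "x ^ p = 1 + (x - 1) * (\<Sum>i<p. x ^ i)"
    using power_diff_1_eq[of x p] by simp
  also have "\<dots> = 1 + int p ^ (e + 1) * z"
    unfolding sum z_def using x by (simp add: algebra_simps)
  finally have "x ^ p = 1 + int p ^ (e + 1) * z" .
  moreover have "\<not> int p dvd z"
  proof -
    have "\<not> int p dvd 1 + int p * u"
      using p(1) not_prime_1 by (auto simp: dvd_add_left_iff)
    then show ?thesis
      using y p(1) by (simp add: z_def prime_dvd_mult_iff)
  qed
  ultimately show ?thesis by blast
qed

lemma one_add_prime_power_pow_prime_power_int:
  fixes p :: nat
  assumes p: "prime p" "odd p" and k: "1 \<le> k"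
  shows "\<exists>z. (1 + int p ^ k) ^ (p ^ j) = 1 + int p ^ (k + j) * z \<and> \<not> int p dvd z"
proof (induction j)
  case 0
  have "\<not> int p dvd 1" using p(1) not_prime_1 by auto
  then show ?case by (intro exI[of _ 1]) simp
next
  case (Suc j)
  then obtain z where "(1 + int p ^ k) ^ (p ^ j) = 1 + int p ^ (k + j) * z" "\<not> int p dvd z"
    by blast
  moreover have "(1 + int p ^ k) ^ (p ^ Suc j) = ((1 + int p ^ k) ^ (p ^ j)) ^ p"
    by (metis power_Suc2 power_mult)
  ultimately show ?case
    using prime_power_lifting_step[OF p, of "k + j"] k by simp
qed

lemma one_add_prime_power_pow_prime_power:
  fixes p :: nat
  assumes p: "prime p" "odd p" and k: "1 \<le> k"
  shows "\<exists>z. (1 + p ^ k) ^ (p ^ j) = 1 + p ^ (k + j) * z \<and> \<not> p dvd z"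
proof -
  obtain z where z: "(1 + int p ^ k) ^ (p ^ j) = 1 + int p ^ (k + j) * z" "\<not> int p dvd z"
    using one_add_prime_power_pow_prime_power_int[OF p k] by blast
  have "1 \<le> (1 + int p ^ k) ^ (p ^ j)"
    by simp
  then have "0 \<le> int p ^ (k + j) * z"
    using z(1) by linarith
  moreover have "0 < int p ^ (k + j)"
    using prime_gt_0_nat[OF p(1)] by simp
  ultimately have "0 \<le> z"
    by (simp add: zero_le_mult_iff)
  then have "int ((1 + p ^ k) ^ (p ^ j)) = int (1 + p ^ (k + j) * nat z)"
    using z(1) by simp
  moreover have "\<not> p dvd nat z"
    using z(2) \<open>0 \<le> z\<close> by (metis int_dvd_int_iff nat_0_le)
  ultimately show ?thesis
    by (metis of_nat_eq_iff)
qed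

section \<open>Powers of square matrices\<close>

lemma pow_mat_add:
  assumes "A \<in> carrier_mat n n"
  shows "A ^\<^sub>m (a + b) = A ^\<^sub>m a * A ^\<^sub>m b"
proof (induction b)
  case 0
  then show ?case using assms by simp
next
  case (Suc b)
  then have "A ^\<^sub>m (a + Suc b) = (A ^\<^sub>m a * A ^\<^sub>m b) * A" by simp
  also have "\<dots> = A ^\<^sub>m a * (A ^\<^sub>m b * A)"
    using assms by (intro assoc_mult_mat) auto
  finally show ?case by simp
qed

lemma pow_mat_mult:
  assumes "A \<in> carrier_mat n n"
  shows "A ^\<^sub>m (a * b) = (A ^\<^sub>m a) ^\<^sub>m b"
proof (induction b)
  case 0
  then show ?case using assms by simp
next
  case (Suc b)
  have "A ^\<^sub>m (a * Suc b) = A ^\<^sub>m (a * b) * A ^\<^sub>m a"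
    using pow_mat_add[OF assms, of "a * b" a] by (simp add: add.commute)
  then show ?case using Suc by simp
qed

lemma one_pow_mat: "(1\<^sub>m n :: 'a :: semiring_1 mat) ^\<^sub>m k = 1\<^sub>m n"
  by (induction k) simp_all

lemma pow_mat_gcd_eq_one:
  assumes A: "A \<in> carrier_mat n n" and "0 < a"
    and a: "A ^\<^sub>m a = 1\<^sub>m n" and b: "A ^\<^sub>m b = 1\<^sub>m n"
  shows "A ^\<^sub>m gcd a b = 1\<^sub>m n"
proof -
  obtain x y where xy: "a * x = b * y + gcd a b"
    using bezout_nat \<open>0 < a\<close> by blast
  have "1\<^sub>m n = A ^\<^sub>m (a * x)"
    by (simp add: pow_mat_mult[OF A] a one_pow_mat)
  also have "\<dots> = A ^\<^sub>m gcd a b"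
    using A by (simp add: xy pow_mat_add pow_mat_mult b one_pow_mat)
  finally show ?thesis by simp
qed

lemma mat_order_prime_power:
  assumes p: "prime p" and A: "A \<in> carrier_mat n n"
    and one: "A ^\<^sub>m (p ^ Suc t) = 1\<^sub>m n" and not_one: "A ^\<^sub>m (p ^ t) \<noteq> 1\<^sub>m n"
  shows "mat_order n A = p ^ Suc t"
  unfolding mat_order_def
proof (rule Least_equality)
  show "0 < p ^ Suc t \<and> A ^\<^sub>m (p ^ Suc t) = 1\<^sub>m n"
    using one p by (simp add: prime_gt_0_nat)
next
  fix m assume m: "0 < m \<and> A ^\<^sub>m m = 1\<^sub>m n"
  then have gcd_one: "A ^\<^sub>m gcd m (p ^ Suc t) = 1\<^sub>m n"
    using pow_mat_gcd_eq_one[OF A] one by blast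
  obtain j where j: "j \<le> Suc t" "gcd m (p ^ Suc t) = p ^ j"
    using divides_primepow_nat[OF p] by (meson gcd_dvd2)
  have "j = Suc t"
  proof (rule ccontr)
    assume "j \<noteq> Suc t"
    with j have "p ^ t = gcd m (p ^ Suc t) * p ^ (t - j)"
      by (simp flip: power_add)
    then have "A ^\<^sub>m (p ^ t) = (A ^\<^sub>m gcd m (p ^ Suc t)) ^\<^sub>m (p ^ (t - j))"
      by (metis pow_mat_mult[OF A])
    also have "\<dots> = 1\<^sub>m n"
      by (simp only: gcd_one one_pow_mat)
    finally show False
      using not_one by contradiction
  qed
  with j m show "p ^ Suc t \<le> m"
    by (metis dvd_imp_le gcd_dvd1)
qed

lemma pow_mat_intertwine:
  assumes A: "A \<in> carrier_mat n n" and C: "C \<in> carrier_mat n n" and D: "D \<in> carrier_mat n n"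
    and AC: "A * C = D * A"
  shows "A * C ^\<^sub>m j = D ^\<^sub>m j * A"
proof (induction j)
  case 0
  then show ?case using A C D by simp
next
  case (Suc j)
  have "A * C ^\<^sub>m Suc j = (A * C ^\<^sub>m j) * C"
    using A C by (simp add: assoc_mult_mat[of A n n "C ^\<^sub>m j" n C n])
  also have "\<dots> = D ^\<^sub>m j * (A * C)"
    using A C D by (simp add: Suc assoc_mult_mat[of "D ^\<^sub>m j" n n A n C n])
  also have "\<dots> = D ^\<^sub>m Suc j * A"
    using A D by (simp add: AC assoc_mult_mat[of "D ^\<^sub>m j" n n D n A n])
  finally show ?case .
qed

lemma pow_mat_conj_pow:
  assumes A: "A \<in> carrier_mat n n" and B: "B \<in> carrier_mat n n"
    and AB: "A * B = B ^\<^sub>m r * A"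
  shows "A ^\<^sub>m m * B = B ^\<^sub>m (r ^ m) * A ^\<^sub>m m"
proof (induction m)
  case 0
  then show ?case using A B by simp
next
  case (Suc m)
  have "A ^\<^sub>m Suc m * B = (A ^\<^sub>m m * B ^\<^sub>m r) * A"
    using A B by (simp add: AB assoc_mult_mat[of "A ^\<^sub>m m" n n _ n _ n])
  also have "A ^\<^sub>m m * B ^\<^sub>m r = (B ^\<^sub>m (r ^ m)) ^\<^sub>m r * A ^\<^sub>m m"
    using A B Suc by (intro pow_mat_intertwine[of _ n]) auto
  also have "(B ^\<^sub>m (r ^ m)) ^\<^sub>m r = B ^\<^sub>m (r ^ Suc m)"
    using B by (simp add: pow_mat_mult[symmetric] mult.commute)
  finally show ?case
    using A B by (simp add: assoc_mult_mat[of "B ^\<^sub>m (r * r ^ m)" n n "A ^\<^sub>m m" n A n])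
qed

lemma col_pow_mat_unit_vec:
  assumes A: "A \<in> carrier_mat n n" and j: "j < n" and col: "col A j = unit_vec n j"
  shows "col (A ^\<^sub>m m) j = unit_vec n j"
proof (induction m)
  case 0
  then show ?case using A j by simp
next
  case (Suc m)
  have "col (A ^\<^sub>m m * A) j = A ^\<^sub>m m *\<^sub>v unit_vec n j"
    using col_mult2[OF pow_carrier_mat[OF A] A j] col by simp
  also have "\<dots> = col (A ^\<^sub>m m) j"
    using A j by (intro eq_vecI) auto
  finally show ?case using Suc by simp
qed

lemma conj_eq_imp_mult_eq:
  assumes A: "A \<in> carrier_mat n n" and B: "B \<in> carrier_mat n n" and A': "A' \<in> carrier_mat n n"
    and inv: "inverts_mat A' A" and conj: "A * B * A' = C"
  shows "A * B = C * A"
proof -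
  have "A * B = A * B * (A' * A)"
    using A B A' inv by (simp add: inverts_mat_def)
  also have "\<dots> = A * B * A' * A"
    using A B A' by (intro assoc_mult_mat[symmetric]) auto
  finally show ?thesis
    unfolding conj .
qed

section \<open>The unipotent Jordan block\<close>

lemma one_add_shift_mat_eq_jordan_block: "1\<^sub>m n + shift_mat n = jordan_block n (1::'a::field)"
  by (rule eq_matI) (auto simp: shift_mat_def)

lemma col_jordan_block:
  assumes "j < n"
  shows "col (jordan_block n (a :: 'a :: comm_ring_1)) j =
    a \<cdot>\<^sub>v unit_vec n j + (if 0 < j then unit_vec n (j - 1) else 0\<^sub>v n)"
  using assms by (intro eq_vecI) auto

lemma row_jordan_block:
  assumes "i < n"
  shows "row (jordan_block n (a :: 'a :: comm_ring_1)) i =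
    a \<cdot>\<^sub>v unit_vec n i + (if i + 1 < n then unit_vec n (i + 1) else 0\<^sub>v n)"
  using assms by (intro eq_vecI) auto

lemma index_mult_jordan_block:
  assumes "M \<in> carrier_mat n n" "i < n" "j < n"
  shows "(M * jordan_block n (a :: 'a :: comm_ring_1)) $$ (i, j) =
    a * M $$ (i, j) + (if 0 < j then M $$ (i, j - 1) else 0)"
  using assms by (simp add: col_jordan_block scalar_prod_add_distrib[of _ n])

lemma index_jordan_block_mult:
  assumes "M \<in> carrier_mat n n" "i < n" "j < n"
  shows "(jordan_block n (a :: 'a :: comm_ring_1) * M) $$ (i, j) =
    a * M $$ (i, j) + (if i + 1 < n then M $$ (i + 1, j) else 0)"
  using assms by (simp add: row_jordan_block add_scalar_prod_distrib[of _ n])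

lemma jordan_block_centralizer_unit_last_col:
  fixes C :: "'a :: comm_ring_1 mat"
  assumes C: "C \<in> carrier_mat n n"
    and comm: "C * jordan_block n a = jordan_block n a * C"
    and col: "col C (n - 1) = unit_vec n (n - 1)"
  shows "C = 1\<^sub>m n"
proof -
  \<comment> \<open>Commuting with the Jordan block gives C(i,j) = C(i+1,j+1) and C(n-1,j) = 0 for
     j < n - 1, so C is determined by its last column.\<close>
  have diagonal_shift: "C $$ (i, j) = (if i + 1 < n then C $$ (i + 1, j + 1) else 0)"
    if "i < n" "j + 1 < n" for i j
    using arg_cong[OF comm, of "\<lambda>M. M $$ (i, j + 1)"] that
    by (simp add: index_mult_jordan_block[OF C] index_jordan_block_mult[OF C])
  have columns: "\<forall>i<n. C $$ (i, n - 1 - d) = (if i = n - 1 - d then 1 else 0)" if "d < n" for d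
    using that
  proof (induction d)
    case 0
    have "C $$ (i, n - 1) = (if i = n - 1 then 1 else 0)" if "i < n" for i
      using arg_cong[OF col, of "\<lambda>v. v $ i"] C that by simp
    then show ?case by simp
  next
    case (Suc d)
    then have "n - 1 - Suc d + 1 = n - 1 - d" by simp
    then show ?case
      using Suc diagonal_shift[of _ "n - 1 - Suc d"] by auto
  qed
  have "C $$ (i, j) = (if i = j then 1 else 0)" if "i < n" "j < n" for i j
    using columns[of "n - 1 - j"] that by (simp add: Suc_diff_Suc)
  then show ?thesis
    using C by (intro eq_matI) auto
qed

lemma conj_jordan_block_pow_eq_one_iff:
  fixes A :: "'a :: comm_ring_1 mat"
  assumes A: "A \<in> carrier_mat n n" and n: "0 < n"
    and col: "col A (n - 1) = unit_vec n (n - 1)"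
    and conj: "A * jordan_block n a = jordan_block n a ^\<^sub>m r * A"
  shows "A ^\<^sub>m m = 1\<^sub>m n \<longleftrightarrow> jordan_block n a ^\<^sub>m (r ^ m) = jordan_block n a"
proof -
  let ?J = "jordan_block n a"
  have conj_pow: "A ^\<^sub>m m * ?J = ?J ^\<^sub>m (r ^ m) * A ^\<^sub>m m"
    using pow_mat_conj_pow[OF A jordan_block_carrier conj] .
  show ?thesis
  proof
    assume "A ^\<^sub>m m = 1\<^sub>m n"
    then show "?J ^\<^sub>m (r ^ m) = ?J"
      using conj_pow by simp
  next
    assume "?J ^\<^sub>m (r ^ m) = ?J"
    then have "A ^\<^sub>m m * ?J = ?J * A ^\<^sub>m m"
      using conj_pow by simp
    moreover have "col (A ^\<^sub>m m) (n - 1) = unit_vec n (n - 1)"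
      using col_pow_mat_unit_vec[OF A _ col] n by simp
    ultimately show "A ^\<^sub>m m = 1\<^sub>m n"
      using jordan_block_centralizer_unit_last_col[OF pow_carrier_mat[OF A]] by blast
  qed
qed

section \<open>The Jordan block in prime characteristic\<close>

lemma of_nat_binomial_char_power_eq_0:
  assumes "prime CHAR('a :: field)" "0 < d" "d < CHAR('a) ^ j"
  shows "(of_nat (CHAR('a) ^ j choose d) :: 'a) = 0"
proof -
  have "([:1, 1:] :: 'a poly) = monom 1 1 + 1"
    by (simp add: monom_altdef one_pCons)
  also have "\<dots> ^ CHAR('a) ^ j = monom 1 1 ^ CHAR('a) ^ j + 1"
    using assms(1) by (subst freshmans_dream') simp_all
  finally have "coeff (([:1, 1:] :: 'a poly) ^ CHAR('a) ^ j) d = 0"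
    using assms by (simp add: monom_power)
  then show ?thesis
    using coeff_linear_poly_power[of d "CHAR('a) ^ j" "1 :: 'a" 1] assms by simp
qed

text \<open>The transvection 1 + c E_1n; with 0-based indices its off-diagonal entry sits at (0, n - 1).\<close>

definition corner_mat :: "nat \<Rightarrow> 'a :: comm_ring_1 \<Rightarrow> 'a mat" where
  "corner_mat n c = mat n n (\<lambda>(i, j). if i = j then 1 else if i = 0 \<and> j = n - 1 then c else 0)"

lemma corner_mat_carrier [simp]: "corner_mat n c \<in> carrier_mat n n"
  by (simp add: corner_mat_def)

lemma corner_mat_dim [simp]: "dim_row (corner_mat n c) = n" "dim_col (corner_mat n c) = n"
  by (simp_all add: corner_mat_def)

lemma index_corner_mat [simp]:
  "i < n \<Longrightarrow> j < n \<Longrightarrow>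
    corner_mat n c $$ (i, j) = (if i = j then 1 else if i = 0 \<and> j = n - 1 then c else 0)"
  by (simp add: corner_mat_def)

lemma corner_mat_zero: "corner_mat n 0 = 1\<^sub>m n"
  by (intro eq_matI) (auto simp: corner_mat_def)

lemma corner_mat_mult: "corner_mat n c * corner_mat n d = corner_mat n (c + d)"
proof (intro eq_matI)
  fix i j assume "i < dim_row (corner_mat n (c + d))" "j < dim_col (corner_mat n (c + d))"
  then have ij: "i < n" "j < n" by simp_all
  let ?r = "row (corner_mat n c) i"
  have r: "?r \<in> carrier_vec n"
    using row_carrier[of "corner_mat n c" i] by simp
  have prod: "(corner_mat n c * corner_mat n d) $$ (i, j) = ?r \<bullet> col (corner_mat n d) j"
    using ij by (simp only: index_mult_mat corner_mat_dim)
  consider (corner) "j = n - 1" "j \<noteq> 0" | (other) "j \<noteq> n - 1" | (first) "j = 0"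
    by blast
  then show "(corner_mat n c * corner_mat n d) $$ (i, j) = corner_mat n (c + d) $$ (i, j)"
  proof cases
    case corner
    then have "col (corner_mat n d) j = unit_vec n j + d \<cdot>\<^sub>v unit_vec n 0"
      using ij by (intro eq_vecI) auto
    then have "?r \<bullet> col (corner_mat n d) j = ?r \<bullet> unit_vec n j + ?r \<bullet> (d \<cdot>\<^sub>v unit_vec n 0)"
      by (simp only: scalar_prod_add_distrib[OF r] unit_vec_carrier smult_carrier_vec)
    also have "\<dots> = corner_mat n (c + d) $$ (i, j)"
      using ij corner by simp
    finally show ?thesis
      unfolding prod .
  next
    case other
    then have "col (corner_mat n d) j = unit_vec n j"
      using ij by (intro eq_vecI) auto
    then show ?thesis
      unfolding prod using ij other by simp
  next
    case first
    then have "col (corner_mat n d) j = unit_vec n j"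
      using ij by (intro eq_vecI) auto
    then show ?thesis
      unfolding prod using ij first by simp
  qed
qed simp_all

lemma corner_mat_pow: "corner_mat n c ^\<^sub>m N = corner_mat n (of_nat N * c)"
  by (induction N) (simp_all add: corner_mat_zero corner_mat_mult algebra_simps)

lemma jordan_block_pow_char_power:
  assumes p: "prime CHAR('a :: field)" and n: "n = 1 + CHAR('a) ^ s"
  shows "jordan_block n (1 :: 'a) ^\<^sub>m CHAR('a) ^ s = corner_mat n 1"
proof (intro eq_matI)
  let ?e = "CHAR('a) ^ s"
  fix i j assume "i < dim_row (corner_mat n (1 :: 'a))" "j < dim_col (corner_mat n (1 :: 'a))"
  then have ij: "i < n" "j < n" by simp_all
  have last: "n - 1 = ?e" using n by simp
  from ij consider "j < i" | "i = j" | "i < j" "j - i < ?e" | "i = 0" "j = ?e"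
    using last by linarith
  then show "(jordan_block n 1 ^\<^sub>m ?e) $$ (i, j) = corner_mat n (1 :: 'a) $$ (i, j)"
  proof cases
    case 3
    then have "(of_nat (?e choose (j - i)) :: 'a) = 0"
      by (intro of_nat_binomial_char_power_eq_0[OF p]) simp_all
    moreover have "\<not> (i = 0 \<and> j = ?e)"
      using 3 by auto
    ultimately show ?thesis
      using 3 ij last by (simp add: jordan_block_pow)
  qed (use ij last in \<open>simp_all add: jordan_block_pow\<close>)
qed simp_all

lemma jordan_block_pow_eq_self_iff:
  assumes p: "prime CHAR('a :: field)" and n: "n = 1 + CHAR('a) ^ s"
  shows "jordan_block n (1 :: 'a) ^\<^sub>m (1 + CHAR('a) ^ s * N) = jordan_block n 1 \<longleftrightarrow>
    CHAR('a) dvd N"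
proof -
  let ?J = "jordan_block n (1 :: 'a)" and ?C = "corner_mat n (of_nat N :: 'a)"
  have "?J ^\<^sub>m (1 + CHAR('a) ^ s * N) = (?J ^\<^sub>m CHAR('a) ^ s) ^\<^sub>m N * ?J"
    by (simp add: pow_mat_mult[of _ n])
  also have "\<dots> = ?C * ?J"
    by (simp add: jordan_block_pow_char_power[OF p n] corner_mat_pow)
  finally have pow: "?J ^\<^sub>m (1 + CHAR('a) ^ s * N) = ?C * ?J" .
  have "2 \<le> n"
    using n prime_gt_0_nat[OF p] one_le_power[of "CHAR('a)" s] by linarith
  then have "(?C * ?J) $$ (0, n - 1) = of_nat N + ?J $$ (0, n - 1)"
    using index_mult_jordan_block[of ?C n 0 "n - 1" 1] by auto
  then have "?C * ?J = ?J \<Longrightarrow> (of_nat N :: 'a) = 0"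
    by simp
  moreover have "(of_nat N :: 'a) = 0 \<Longrightarrow> ?C * ?J = ?J"
    by (simp add: corner_mat_zero)
  ultimately show ?thesis
    unfolding pow by (auto simp: of_nat_eq_0_iff_char_dvd)
qed

theorem proposition3p6:
  fixes p s k n :: nat and A Ainv B :: "'a :: field mat"
  assumes "prime p" and "odd p" and "CHAR('a) = p"
    and "s \<ge> 1" and "n = 1 + p ^ s"
    and "B = 1\<^sub>m n + shift_mat n"
    and "1 \<le> k" and "k \<le> s"
    and "A \<in> unitriangular_mat n"
    and "\<forall>i<n. A $$ (i, n - 1) = (if i = n - 1 then 1 else 0)"
    and "Ainv \<in> carrier_mat n n" and "inverts_mat A Ainv" and "inverts_mat Ainv A"
    and "A * B * Ainv = B ^\<^sub>m (1 + p ^ k)"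
  shows "mat_order n A = p ^ (s + 1 - k)"
proof -
  let ?J = "jordan_block n (1 :: 'a)" and ?r = "1 + p ^ k"
  have p: "prime CHAR('a)" and n: "n = 1 + CHAR('a) ^ s"
    using assms(1,3,5) by simp_all
  have A: "A \<in> carrier_mat n n"
    using assms(9) by (simp add: unitriangular_mat_def)
  have col: "col A (n - 1) = unit_vec n (n - 1)"
    using assms(5,10) A by (intro eq_vecI) auto
  have "A * ?J * Ainv = ?J ^\<^sub>m ?r"
    using assms(14) unfolding assms(6) one_add_shift_mat_eq_jordan_block .
  then have "A * ?J = ?J ^\<^sub>m ?r * A"
    by (rule conj_eq_imp_mult_eq[OF A jordan_block_carrier assms(11,13)])
  then have pow_eq_one_iff: "A ^\<^sub>m m = 1\<^sub>m n \<longleftrightarrow> ?J ^\<^sub>m (?r ^ m) = ?J" for m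
    using conj_jordan_block_pow_eq_one_iff[OF A _ col] assms(5) by simp
  obtain z where z: "?r ^ p ^ (s - k) = 1 + p ^ s * z" "\<not> p dvd z"
    using one_add_prime_power_pow_prime_power[OF assms(1,2,7), of "s - k"] assms(8) by auto
  obtain z' where z': "?r ^ p ^ Suc (s - k) = 1 + p ^ s * (p * z')"
    using one_add_prime_power_pow_prime_power[OF assms(1,2,7), of "Suc (s - k)"] assms(8)
    by (auto simp: ac_simps)
  have "A ^\<^sub>m p ^ Suc (s - k) = 1\<^sub>m n"
    using pow_eq_one_iff z' jordan_block_pow_eq_self_iff[OF p n] assms(3) by simp
  moreover have "A ^\<^sub>m p ^ (s - k) \<noteq> 1\<^sub>m n"
    using pow_eq_one_iff z jordan_block_pow_eq_self_iff[OF p n] assms(3) by simp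
  moreover have "s + 1 - k = Suc (s - k)"
    using assms(8) by simp
  ultimately show ?thesis
    using mat_order_prime_power[OF assms(1) A] by simp
qed

end
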